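(* Let $t \in \mathbb{N}$ and let $G \in \mathcal{X}_t$ be a graph with no cut vertex. Let $A,B\subseteq V(G)$ be disjoint independent sets that are complete to each other, with $|A|,|B|\ge 3t^2+t+1$, such that $G[A\cup B]$ is a maximal induced complete bipartite subgraph of $G$ (i.e. there are no independent sets $A'\supseteq A$, $B'\supseteq B$, disjoint and complete to each other, with $A'\cup B'\supsetneq A\cup B$). Then $A\cup B$ is a module of $G$.
   Context: All graphs are finite and simple. For graphs $G_1=(V_1,E_1)$, $G_2=(V_2,E_2)$, $G_1\cap G_2=(V_1\cap V_2, E_1\cap E_2)$. For a graph $G=(V,E)$ and an injective map $\alpha$ on $V$, $G^{\alpha}$ has vertex set $\alpha(V)$ and edge set $\{\{\alpha(v),\alpha(w)\}: \{v,w\}\in E\}$. We write $G\xrightarrow{\cap} H$ if $H$ is (isomorphic to) $G^{\alpha_1}\cap\cdots\cap G^{\alpha_k}$ for some $k\ge1$ and injective maps $\alpha_1,\dots,\alpha_k$ on $V(G)$. For a set $M$ of graphs, $\mathrm{SiFree}(M)$ is the class of graphs $G$ such that $G\xrightarrow{\cap}F$ holds for no $F\in M$. For integers $a,b,c\ge1$, $S_{a,b,c}$ is the tree consisting of a vertex of degree $3$ together with three pendant paths having $a$, $b$, $c$ edges respectively; $tS_{t,t,t}$ is the disjoint union of $t$ copies of $S_{t,t,t}$, and $\mathcal{X}_t=\mathrm{SiFree}(\{tS_{t,t,t}\})$. A cut vertex is a vertex whose removal increases the number of connected components. Sets $X,Y$ are complete (anticomplete) to each other if every (no) vertex of $X$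 is adjacent to every (any) vertex of $Y$. A set $U\subseteq V(G)$ is a module if every vertex of $V(G)\setminus U$ is complete or anticomplete to $U$. *)

theory Defs
  imports Main
begin

type_synonym 'v graph = "'v set \<times> 'v set set"

abbreviation verts :: "'v graph \<Rightarrow> 'v set" where "verts G \<equiv> fst G"
abbreviation edges :: "'v graph \<Rightarrow> 'v set set" where "edges G \<equiv> snd G"

definition is_graph :: "'v graph \<Rightarrow> bool" where
  "is_graph G \<longleftrightarrow> finite (verts G) \<and>
     (\<forall>e\<in>edges G. \<exists>u v. e = {u, v} \<and> u \<noteq> v \<and> u \<in> verts G \<and> v \<in> verts G)"

definition adj :: "'v graph \<Rightarrow> 'v \<Rightarrow> 'v \<Rightarrow> bool" where
  "adj G u v \<longleftrightarrow> {u, v} \<in> edges G"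

definition gimage :: "('v \<Rightarrow> 'w) \<Rightarrow> 'v graph \<Rightarrow> 'w graph" where
  "gimage \<alpha> G = (\<alpha> ` verts G, (\<lambda>e. \<alpha> ` e) ` edges G)"

definition ginter :: "'w graph set \<Rightarrow> 'w graph" where
  "ginter Gs = (\<Inter>H\<in>Gs. verts H, \<Inter>H\<in>Gs. edges H)"

definition graph_iso :: "'v graph \<Rightarrow> 'w graph \<Rightarrow> bool" where
  "graph_iso G H \<longleftrightarrow> (\<exists>f. bij_betw f (verts G) (verts H) \<and>
     edges H = (\<lambda>e. f ` e) ` edges G)"

text \<open>G -->cap H: H is isomorphic to an intersection of k >= 1 injective images
  of G. Images are taken in the infinite type nat, which is no loss of generality
  since V(G) is finite.\<close>
definition inter_to :: "'v graph \<Rightarrow> 'w graph \<Rightarrow> bool" where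
  "inter_to G H \<longleftrightarrow> (\<exists>\<alpha>s :: ('v \<Rightarrow> nat) list. \<alpha>s \<noteq> [] \<and>
     (\<forall>\<alpha>\<in>set \<alpha>s. inj_on \<alpha> (verts G)) \<and>
     graph_iso (ginter ((\<lambda>\<alpha>. gimage \<alpha> G) ` set \<alpha>s)) H)"

definition sifree1 :: "'w graph \<Rightarrow> 'v graph \<Rightarrow> bool" where
  "sifree1 F G \<longleftrightarrow> \<not> inter_to G F"

text \<open>t S_{t,t,t}: copy i < t; the centre of copy i is (i,0,0); the vertex at
  distance l (1 <= l <= t) on branch j < 3 of copy i is (i,j,l).\<close>
definition tStt :: "nat \<Rightarrow> (nat \<times> nat \<times> nat) graph" where
  "tStt t = ({(i, 0, 0) | i. i < t} \<union> {(i, j, l) | i j l. i < t \<and> j < 3 \<and> 1 \<le> l \<and> l \<le> t},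
     {{(i, 0, 0), (i, j, 1)} | i j. i < t \<and> j < 3} \<union>
     {{(i, j, l), (i, j, Suc l)} | i j l. i < t \<and> j < 3 \<and> 1 \<le> l \<and> l < t})"

definition X_class :: "nat \<Rightarrow> 'v graph \<Rightarrow> bool" where
  "X_class t G \<longleftrightarrow> is_graph G \<and> sifree1 (tStt t) G"

definition reach :: "'v graph \<Rightarrow> 'v \<Rightarrow> 'v \<Rightarrow> bool" where
  "reach G = (\<lambda>u v. u \<in> verts G \<and> v \<in> verts G \<and> adj G u v)\<^sup>*\<^sup>*"

definition num_components :: "'v graph \<Rightarrow> nat" where
  "num_components G = card ((\<lambda>v. {u \<in> verts G. reach G v u}) ` verts G)"

definition delete_vertex :: "'v graph \<Rightarrow> 'v \<Rightarrow> 'v graph" where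
  "delete_vertex G v = (verts G - {v}, {e \<in> edges G. v \<notin> e})"

definition cut_vertex :: "'v graph \<Rightarrow> 'v \<Rightarrow> bool" where
  "cut_vertex G v \<longleftrightarrow> v \<in> verts G \<and> num_components (delete_vertex G v) > num_components G"

definition independent :: "'v graph \<Rightarrow> 'v set \<Rightarrow> bool" where
  "independent G S \<longleftrightarrow> (\<forall>u\<in>S. \<forall>v\<in>S. \<not> adj G u v)"

definition complete_to :: "'v graph \<Rightarrow> 'v set \<Rightarrow> 'v set \<Rightarrow> bool" where
  "complete_to G X Y \<longleftrightarrow> (\<forall>x\<in>X. \<forall>y\<in>Y. adj G x y)"

definition anticomplete_to :: "'v graph \<Rightarrow> 'v set \<Rightarrow> 'v set \<Rightarrow> bool" where
  "anticomplete_to G X Y \<longleftrightarrow> (\<forall>x\<in>X. \<forall>y\<in>Y. \<not> adj G x y)"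

definition is_module :: "'v graph \<Rightarrow> 'v set \<Rightarrow> bool" where
  "is_module G U \<longleftrightarrow> U \<subseteq> verts G \<and>
     (\<forall>v \<in> verts G - U. complete_to G {v} U \<or> anticomplete_to G {v} U)"

definition bip_pair :: "'v graph \<Rightarrow> 'v set \<Rightarrow> 'v set \<Rightarrow> bool" where
  "bip_pair G A B \<longleftrightarrow> A \<subseteq> verts G \<and> B \<subseteq> verts G \<and> A \<inter> B = {} \<and>
     independent G A \<and> independent G B \<and> complete_to G A B"

definition maximal_bip_pair :: "'v graph \<Rightarrow> 'v set \<Rightarrow> 'v set \<Rightarrow> bool" where
  "maximal_bip_pair G A B \<longleftrightarrow> bip_pair G A B \<and>
     \<not> (\<exists>A' B'. A \<subseteq> A' \<and> B \<subseteq> B' \<and> bip_pair G A' B' \<and> A \<union> B \<subset> A' \<union> B')"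

end

theory Submission
  imports Defs
begin

(* Suppose a vertex w outside A \<union> B is neither complete nor anticomplete to A \<union> B. By
   maximality of the pair, w is mixed on one side, say adjacent to a\<^sub>1 and non-adjacent to a\<^sub>0
   in A; we show that then inter_to G T holds for T = tS_{t,t,t}, contradicting G \<in> X_t.

   It suffices to embed T into G in such a way that any prescribed non-adjacent pair x, y of T is
   mapped to a non-adjacent pair: suitably relabelled images of G then intersect in a copy of T.
   Since T is a forest and |A|, |B| > |V(T)|, a proper 2-colouring of T maps it into the complete
   bipartite graph between A and B, and choosing the colouring spider by spider separates every
   pair except two vertices of one spider at odd distance. Such x and y are sent to w and to a
   non-neighbour a\<^sub>2 \<in> A of w, the parent of x to a\<^sub>1, and the branch beyond x is rerouted along
   a path from w that meets A \<union> B first at its end, outside a\<^sub>1. This path exists because a\<^sub>1 is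
   not a cut vertex; the rest of T is again 2-coloured into A and B. *)

lemma adj_commute: "adj G u v \<longleftrightarrow> adj G v u"
  unfolding adj_def by (simp add: insert_commute)

lemma is_graph_edgeE:
  assumes "is_graph G" "e \<in> edges G"
  obtains u v where "e = {u, v}" "u \<noteq> v" "u \<in> verts G" "v \<in> verts G"
  using assms unfolding is_graph_def by meson

lemma edge_subset_verts: "is_graph G \<Longrightarrow> e \<in> edges G \<Longrightarrow> e \<subseteq> verts G"
  by (metis is_graph_edgeE empty_subsetI insert_subset)

lemma adj_verts: "is_graph G \<Longrightarrow> adj G u v \<Longrightarrow> u \<in> verts G \<and> v \<in> verts G"
  unfolding adj_def by (meson edge_subset_verts insert_subset)

lemma not_adj_self: "is_graph G \<Longrightarrow> \<not> adj G v v"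
  unfolding adj_def by (metis is_graph_edgeE doubleton_eq_iff insert_absorb2)

lemma bip_pair_swap: "bip_pair G A B \<Longrightarrow> bip_pair G B A"
  unfolding bip_pair_def complete_to_def by (auto intro: adj_commute[THEN iffD1])

lemma bip_pair_adj: "bip_pair G A B \<Longrightarrow> a \<in> A \<Longrightarrow> b \<in> B \<Longrightarrow> adj G a b \<and> adj G b a"
  unfolding bip_pair_def complete_to_def by (metis adj_commute)

lemma bip_pair_not_adj:
  "bip_pair G A B \<Longrightarrow> (u \<in> A \<and> v \<in> A) \<or> (u \<in> B \<and> v \<in> B) \<Longrightarrow> \<not> adj G u v"
  unfolding bip_pair_def independent_def by blast

section \<open>Intersections of relabelled copies\<close>

definition embedding :: "'w graph \<Rightarrow> 'v graph \<Rightarrow> ('w \<Rightarrow> 'v) \<Rightarrow> bool" where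
  "embedding T G \<phi> \<longleftrightarrow> inj_on \<phi> (verts T) \<and> \<phi> ` verts T \<subseteq> verts G \<and>
     (\<forall>a b. {a, b} \<in> edges T \<longrightarrow> adj G (\<phi> a) (\<phi> b))"

(* The copy \<phi>(V) of T receives the even labels 2 code x, whatever \<phi> is; every other
   vertex receives an odd label, and the tag i \<in> {0, 1} keeps the odd labels of two
   relabellings apart. *)
definition relabel ::
    "('w \<Rightarrow> nat) \<Rightarrow> ('v \<Rightarrow> nat) \<Rightarrow> 'w set \<Rightarrow> nat \<Rightarrow> ('w \<Rightarrow> 'v) \<Rightarrow> 'v \<Rightarrow> nat" where
  "relabel code enc V i \<phi> u =
     (if u \<in> \<phi> ` V then 2 * code (inv_into V \<phi> u) else 4 * enc u + 2 * i + 1)"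

lemma relabel_image: "inj_on \<phi> V \<Longrightarrow> x \<in> V \<Longrightarrow> relabel code enc V i \<phi> (\<phi> x) = 2 * code x"
  by (simp add: relabel_def)

lemma relabel_eq_double_code:
  assumes "relabel code enc V i \<phi> u = 2 * code x" "inj_on code V" "inj_on \<phi> V" "x \<in> V"
  shows "u = \<phi> x"
proof (cases "u \<in> \<phi> ` V")
  case True
  then have "code (inv_into V \<phi> u) = code x" using assms(1) by (simp add: relabel_def)
  then have "inv_into V \<phi> u = x" using True assms(2,4) by (meson inj_onD inv_into_into)
  then show ?thesis using True by (auto simp: f_inv_into_f)
next
  case False
  then show ?thesis using assms(1) by (simp add: relabel_def) presburger
qed

lemma inj_on_relabel:
  assumes code: "inj_on code V" and enc: "inj_on enc W" and \<phi>: "inj_on \<phi> V"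
  shows "inj_on (relabel code enc V i \<phi>) W"
proof (rule inj_onI)
  fix u v assume uv: "u \<in> W" "v \<in> W" "relabel code enc V i \<phi> u = relabel code enc V i \<phi> v"
  show "u = v"
  proof (cases "u \<in> \<phi> ` V \<or> v \<in> \<phi> ` V")
    case True
    then obtain x where x: "x \<in> V" "u = \<phi> x \<or> v = \<phi> x" by blast
    then have "relabel code enc V i \<phi> u = 2 * code x" "relabel code enc V i \<phi> v = 2 * code x"
      using uv(3) relabel_image[OF \<phi>] by auto
    then show ?thesis using relabel_eq_double_code[OF _ code \<phi> x(1)] by metis
  next
    case False
    then show ?thesis using uv inj_onD[OF enc] by (simp add: relabel_def)
  qed
qed

lemma relabel_preimage_double_code:
  assumes "relabel code enc V i \<phi> ` e \<subseteq> (\<lambda>x. 2 * code x) ` S" "S \<subseteq> V"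
    and "inj_on code V" "inj_on \<phi> V"
  shows "e \<subseteq> \<phi> ` S"
proof
  fix u assume "u \<in> e"
  then obtain x where "x \<in> S" "relabel code enc V i \<phi> u = 2 * code x" using assms(1) by blast
  then show "u \<in> \<phi> ` S" using relabel_eq_double_code[OF _ assms(3,4)] assms(2) by blast
qed

lemma Inter_relabel_verts:
  assumes emb: "\<And>i \<phi>. (i, \<phi>) \<in> \<Psi> \<Longrightarrow> embedding T G \<phi>"
    and tags: "(0, \<phi>\<^sub>0) \<in> \<Psi>" "(1, \<phi>\<^sub>0) \<in> \<Psi>"
  shows "(\<Inter>(i, \<phi>)\<in>\<Psi>. relabel code enc (verts T) i \<phi> ` verts G) = (\<lambda>x. 2 * code x) ` verts T"
proof (intro equalityI subsetI)
  fix z assume "z \<in> (\<lambda>x. 2 * code x) ` verts T"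
  then obtain x where x: "x \<in> verts T" "z = 2 * code x" by blast
  have "z \<in> relabel code enc (verts T) i \<phi> ` verts G" if "(i, \<phi>) \<in> \<Psi>" for i \<phi>
    using emb[OF that] x relabel_image[of \<phi> "verts T" x code enc i]
    unfolding embedding_def by (metis image_eqI image_subset_iff)
  then show "z \<in> (\<Inter>(i, \<phi>)\<in>\<Psi>. relabel code enc (verts T) i \<phi> ` verts G)" by blast
next
  fix z assume z: "z \<in> (\<Inter>(i, \<phi>)\<in>\<Psi>. relabel code enc (verts T) i \<phi> ` verts G)"
  obtain u where u: "z = relabel code enc (verts T) 0 \<phi>\<^sub>0 u"
    using INT_D[OF z tags(1)] by auto
  obtain v where v: "z = relabel code enc (verts T) 1 \<phi>\<^sub>0 v"
    using INT_D[OF z tags(2)] by auto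
  show "z \<in> (\<lambda>x. 2 * code x) ` verts T"
  proof (cases "u \<in> \<phi>\<^sub>0 ` verts T")
    case True
    then show ?thesis using u by (simp add: relabel_def inv_into_into)
  next
    case False
    then have "z mod 4 = 1" using u by (simp add: relabel_def)
    moreover have "z mod 4 \<noteq> 1" using v by (simp add: relabel_def) presburger
    ultimately show ?thesis by simp
  qed
qed

lemma double_code_edges_subset_Inter_relabel:
  assumes T: "is_graph T" and emb: "\<And>i \<phi>. (i, \<phi>) \<in> \<Psi> \<Longrightarrow> embedding T G \<phi>"
  shows "(`) (\<lambda>x. 2 * code x) ` edges T \<subseteq>
    (\<Inter>(i, \<phi>)\<in>\<Psi>. (`) (relabel code enc (verts T) i \<phi>) ` edges G)"
proof
  fix E assume "E \<in> (`) (\<lambda>x. 2 * code x) ` edges T"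
  then obtain e where e: "e \<in> edges T" "E = (\<lambda>x. 2 * code x) ` e" by blast
  then obtain x y where xy: "e = {x, y}" "x \<in> verts T" "y \<in> verts T"
    using is_graph_edgeE[OF T] by metis
  have E_in: "E \<in> (`) (relabel code enc (verts T) i \<phi>) ` edges G" if "(i, \<phi>) \<in> \<Psi>" for i \<phi>
  proof -
    have "{\<phi> x, \<phi> y} \<in> edges G" "inj_on \<phi> (verts T)"
      using emb[OF that] e(1) xy(1) unfolding embedding_def adj_def by auto
    then have "E = relabel code enc (verts T) i \<phi> ` {\<phi> x, \<phi> y}"
      using xy e(2) by (simp add: relabel_image)
    then show ?thesis using \<open>{\<phi> x, \<phi> y} \<in> edges G\<close> by (rule rev_image_eqI[rotated])
  qed
  show "E \<in> (\<Inter>(i, \<phi>)\<in>\<Psi>. (`) (relabel code enc (verts T) i \<phi>) ` edges G)"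
  proof (rule INT_I)
    fix p assume "p \<in> \<Psi>"
    then show "E \<in> (case p of (i, \<phi>) \<Rightarrow> (`) (relabel code enc (verts T) i \<phi>) ` edges G)"
      using E_in by (cases p) simp
  qed
qed

lemma Inter_relabel_edges_even:
  assumes G: "is_graph G" and emb: "\<And>i \<phi>. (i, \<phi>) \<in> \<Psi> \<Longrightarrow> embedding T G \<phi>"
    and tags: "(0, \<phi>\<^sub>0) \<in> \<Psi>" "(1, \<phi>\<^sub>0) \<in> \<Psi>"
    and E: "E \<in> (\<Inter>(i, \<phi>)\<in>\<Psi>. (`) (relabel code enc (verts T) i \<phi>) ` edges G)"
  shows "E \<subseteq> (\<lambda>x. 2 * code x) ` verts T"
proof -
  have "E \<subseteq> (\<Inter>(i, \<phi>)\<in>\<Psi>. relabel code enc (verts T) i \<phi> ` verts G)"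
  proof (intro subsetI INT_I)
    fix z p assume "z \<in> E" "p \<in> \<Psi>"
    moreover have "\<exists>e\<in>edges G. E = relabel code enc (verts T) i \<phi> ` e" if "(i, \<phi>) \<in> \<Psi>" for i \<phi>
      using INT_D[OF E that] by auto
    ultimately show "z \<in> (case p of (i, \<phi>) \<Rightarrow> relabel code enc (verts T) i \<phi> ` verts G)"
      using edge_subset_verts[OF G] by (cases p) fastforce
  qed
  then show ?thesis using Inter_relabel_verts[of \<Psi> T G, OF emb tags] by simp
qed

lemma Inter_relabel_edges_subset:
  assumes G: "is_graph G" and code: "inj_on code (verts T)"
    and emb: "\<And>i \<phi>. (i, \<phi>) \<in> \<Psi> \<Longrightarrow> embedding T G \<phi>"
    and tags: "(0, \<phi>\<^sub>0) \<in> \<Psi>" "(1, \<phi>\<^sub>0) \<in> \<Psi>"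
    and sep: "\<And>x y. x \<in> verts T \<Longrightarrow> y \<in> verts T \<Longrightarrow> x \<noteq> y \<Longrightarrow> {x, y} \<notin> edges T \<Longrightarrow>
       \<exists>\<phi>. (0, \<phi>) \<in> \<Psi> \<and> \<not> adj G (\<phi> x) (\<phi> y)"
    and E: "E \<in> (\<Inter>(i, \<phi>)\<in>\<Psi>. (`) (relabel code enc (verts T) i \<phi>) ` edges G)"
  shows "E \<in> (`) (\<lambda>x. 2 * code x) ` edges T"
proof -
  have E_img: "\<exists>e\<in>edges G. E = relabel code enc (verts T) i \<phi> ` e" if "(i, \<phi>) \<in> \<Psi>" for i \<phi>
    using INT_D[OF E that] by auto
  have E_even: "E \<subseteq> (\<lambda>x. 2 * code x) ` verts T"
    by (rule Inter_relabel_edges_even[OF G emb tags E])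
  obtain e\<^sub>0 where e\<^sub>0: "e\<^sub>0 \<in> edges G" "E = relabel code enc (verts T) 0 \<phi>\<^sub>0 ` e\<^sub>0"
    using E_img[OF tags(1)] by blast
  then obtain u v where uv: "e\<^sub>0 = {u, v}" "u \<noteq> v" using is_graph_edgeE[OF G] by metis
  obtain x y where x: "x \<in> verts T" "relabel code enc (verts T) 0 \<phi>\<^sub>0 u = 2 * code x"
    and y: "y \<in> verts T" "relabel code enc (verts T) 0 \<phi>\<^sub>0 v = 2 * code y"
    using E_even e\<^sub>0(2) uv(1) by blast
  have inj\<^sub>0: "inj_on \<phi>\<^sub>0 (verts T)" using emb[OF tags(1)] unfolding embedding_def by simp
  have "u = \<phi>\<^sub>0 x" "v = \<phi>\<^sub>0 y"
    using relabel_eq_double_code[OF _ code inj\<^sub>0] x y by auto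
  then have "x \<noteq> y" using uv(2) by auto
  have E_xy: "E = (\<lambda>x. 2 * code x) ` {x, y}" using e\<^sub>0(2) uv(1) x(2) y(2) by simp
  have "{x, y} \<in> edges T"
  proof (rule ccontr)
    assume "{x, y} \<notin> edges T"
    then obtain \<phi> where \<phi>: "(0, \<phi>) \<in> \<Psi>" "\<not> adj G (\<phi> x) (\<phi> y)"
      using sep x(1) y(1) \<open>x \<noteq> y\<close> by blast
    obtain e where e: "e \<in> edges G" "E = relabel code enc (verts T) 0 \<phi> ` e"
      using E_img[OF \<phi>(1)] by blast
    have "inj_on \<phi> (verts T)" using emb[OF \<phi>(1)] unfolding embedding_def by simp
    moreover have "relabel code enc (verts T) 0 \<phi> ` e \<subseteq> (\<lambda>x. 2 * code x) ` {x, y}"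
      using e(2) E_xy by simp
    ultimately have "e \<subseteq> \<phi> ` {x, y}"
      using relabel_preimage_double_code[OF _ _ code] x(1) y(1) by blast
    moreover obtain a b where "e = {a, b}" "a \<noteq> b" using is_graph_edgeE[OF G e(1)] by metis
    ultimately have "e = {\<phi> x, \<phi> y}" by auto
    then show False using \<phi>(2) e(1) unfolding adj_def by simp
  qed
  then show ?thesis using E_xy by blast
qed

lemma graph_iso_image:
  assumes T: "is_graph T" and f: "inj_on f (verts T)"
  shows "graph_iso (f ` verts T, (`) f ` edges T) T"
  unfolding graph_iso_def
proof (intro exI conjI)
  show "bij_betw (inv_into (verts T) f) (verts (f ` verts T, (`) f ` edges T)) (verts T)"
    using bij_betw_inv_into[OF inj_on_imp_bij_betw[OF f]] by simp
  have "inv_into (verts T) f ` f ` e = e" if "e \<in> edges T" for e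
    using inv_into_image_cancel[OF f edge_subset_verts[OF T that]] .
  then show "edges T = (`) (inv_into (verts T) f) ` edges (f ` verts T, (`) f ` edges T)"
    by (simp add: image_image)
qed

lemma finite_separating_embeddings:
  assumes T: "is_graph T" and emb\<^sub>0: "embedding T G \<phi>\<^sub>0"
    and sep: "\<forall>x\<in>verts T. \<forall>y\<in>verts T. x \<noteq> y \<and> {x, y} \<notin> edges T \<longrightarrow>
       (\<exists>\<phi>. embedding T G \<phi> \<and> \<not> adj G (\<phi> x) (\<phi> y))"
  shows "\<exists>\<Phi>. finite \<Phi> \<and> \<phi>\<^sub>0 \<in> \<Phi> \<and> (\<forall>\<phi>\<in>\<Phi>. embedding T G \<phi>) \<and>
    (\<forall>x\<in>verts T. \<forall>y\<in>verts T. x \<noteq> y \<and> {x, y} \<notin> edges T \<longrightarrow> (\<exists>\<phi>\<in>\<Phi>. \<not> adj G (\<phi> x) (\<phi> y)))"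
proof -
  define NE where "NE = {(x, y) \<in> verts T \<times> verts T. x \<noteq> y \<and> {x, y} \<notin> edges T}"
  define separator where
    "separator = (\<lambda>(x, y). SOME \<phi>. embedding T G \<phi> \<and> \<not> adj G (\<phi> x) (\<phi> y))"
  have separator: "embedding T G (separator (x, y)) \<and> \<not> adj G (separator (x, y) x) (separator (x, y) y)"
    if "(x, y) \<in> NE" for x y
  proof -
    have "\<exists>\<phi>. embedding T G \<phi> \<and> \<not> adj G (\<phi> x) (\<phi> y)"
      using sep that unfolding NE_def by auto
    from someI_ex[OF this] show ?thesis unfolding separator_def by simp
  qed
  show ?thesis
  proof (intro exI[of _ "insert \<phi>\<^sub>0 (separator ` NE)"] conjI ballI impI)
    have "NE \<subseteq> verts T \<times> verts T" unfolding NE_def by auto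
    then show "finite (insert \<phi>\<^sub>0 (separator ` NE))"
      using T unfolding is_graph_def by (simp add: finite_subset)
    show "\<phi>\<^sub>0 \<in> insert \<phi>\<^sub>0 (separator ` NE)" by simp
    show "embedding T G \<phi>" if "\<phi> \<in> insert \<phi>\<^sub>0 (separator ` NE)" for \<phi>
      using that emb\<^sub>0 separator by auto
    fix x y assume "x \<in> verts T" "y \<in> verts T" "x \<noteq> y \<and> {x, y} \<notin> edges T"
    then have "(x, y) \<in> NE" unfolding NE_def by simp
    then show "\<exists>\<phi>\<in>insert \<phi>\<^sub>0 (separator ` NE). \<not> adj G (\<phi> x) (\<phi> y)"
      using separator by blast
  qed
qed

lemma inter_to_if_separating_embeddings:
  fixes G :: "'v graph" and T :: "'w graph"
  assumes G: "is_graph G" and T: "is_graph T" and emb\<^sub>0: "embedding T G \<phi>\<^sub>0"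
    and sep: "\<And>x y. x \<in> verts T \<Longrightarrow> y \<in> verts T \<Longrightarrow> x \<noteq> y \<Longrightarrow> {x, y} \<notin> edges T \<Longrightarrow>
       \<exists>\<phi>. embedding T G \<phi> \<and> \<not> adj G (\<phi> x) (\<phi> y)"
  shows "inter_to G T"
proof -
  obtain \<Phi> where \<Phi>: "finite \<Phi>" "\<phi>\<^sub>0 \<in> \<Phi>" "\<forall>\<phi>\<in>\<Phi>. embedding T G \<phi>"
    and sep\<Phi>: "\<forall>x\<in>verts T. \<forall>y\<in>verts T. x \<noteq> y \<and> {x, y} \<notin> edges T \<longrightarrow>
       (\<exists>\<phi>\<in>\<Phi>. \<not> adj G (\<phi> x) (\<phi> y))"
    using finite_separating_embeddings[OF T emb\<^sub>0] sep by blast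
  have fin: "finite (verts T)" "finite (verts G)" using T G unfolding is_graph_def by simp_all
  obtain code :: "'w \<Rightarrow> nat" where code: "inj_on code (verts T)"
    using finite_imp_inj_to_nat_seg[OF fin(1)] by blast
  obtain enc :: "'v \<Rightarrow> nat" where enc: "inj_on enc (verts G)"
    using finite_imp_inj_to_nat_seg[OF fin(2)] by blast
  define \<Psi> where "\<Psi> = insert (1 :: nat, \<phi>\<^sub>0) (Pair 0 ` \<Phi>)"
  have emb: "embedding T G \<phi>" if "(i, \<phi>) \<in> \<Psi>" for i \<phi>
    using that \<Phi>(2,3) unfolding \<Psi>_def by auto
  have tags: "(0, \<phi>\<^sub>0) \<in> \<Psi>" "(1, \<phi>\<^sub>0) \<in> \<Psi>" using \<Phi>(2) unfolding \<Psi>_def by auto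
  have sep\<Psi>: "\<exists>\<phi>. (0, \<phi>) \<in> \<Psi> \<and> \<not> adj G (\<phi> x) (\<phi> y)"
    if nonedge: "x \<in> verts T" "y \<in> verts T" "x \<noteq> y" "{x, y} \<notin> edges T" for x y
  proof -
    obtain \<phi> where "\<phi> \<in> \<Phi>" "\<not> adj G (\<phi> x) (\<phi> y)" using sep\<Phi> nonedge by blast
    then show ?thesis unfolding \<Psi>_def by blast
  qed
  have "finite \<Psi>" using \<Phi>(1) unfolding \<Psi>_def by simp
  then obtain \<psi>s where \<psi>s: "set \<psi>s = \<Psi>" using finite_list by blast
  define \<alpha>s where "\<alpha>s = map (\<lambda>(i, \<phi>). relabel code enc (verts T) i \<phi>) \<psi>s"
  have "(\<Inter>(i, \<phi>)\<in>\<Psi>. (`) (relabel code enc (verts T) i \<phi>) ` edges G) \<subseteq> (`) (\<lambda>x. 2 * code x) ` edges T"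
    by (intro subsetI) (rule Inter_relabel_edges_subset[OF G code emb tags sep\<Psi>])
  with double_code_edges_subset_Inter_relabel[OF T emb]
  have "(\<Inter>(i, \<phi>)\<in>\<Psi>. (`) (relabel code enc (verts T) i \<phi>) ` edges G) = (`) (\<lambda>x. 2 * code x) ` edges T"
    by (rule equalityI[rotated])
  then have "ginter ((\<lambda>\<alpha>. gimage \<alpha> G) ` set \<alpha>s) =
      ((\<lambda>x. 2 * code x) ` verts T, (`) (\<lambda>x. 2 * code x) ` edges T)"
    using Inter_relabel_verts[of \<Psi> T G, OF emb tags]
    unfolding ginter_def gimage_def \<alpha>s_def \<psi>s[symmetric]
    by (simp add: image_image case_prod_beta)
  moreover have "\<forall>\<alpha>\<in>set \<alpha>s. inj_on \<alpha> (verts G)"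
    using inj_on_relabel[OF code enc] emb unfolding \<alpha>s_def \<psi>s[symmetric] embedding_def by auto
  moreover have "\<alpha>s \<noteq> []" using \<psi>s tags unfolding \<alpha>s_def by auto
  moreover have "inj_on (\<lambda>x. 2 * code x) (verts T)" using code by (simp add: inj_on_def)
  ultimately show ?thesis
    unfolding inter_to_def using graph_iso_image[OF T] by (intro exI[of _ \<alpha>s]) simp
qed

section \<open>The spider forest tS_{t,t,t}\<close>

lemma verts_tStt_iff:
  "(i, j, l) \<in> verts (tStt t) \<longleftrightarrow> i < t \<and> (j = 0 \<and> l = 0 \<or> j < 3 \<and> 1 \<le> l \<and> l \<le> t)"
  unfolding tStt_def by auto

definition tStt_arc :: "nat \<Rightarrow> nat \<times> nat \<times> nat \<Rightarrow> nat \<times> nat \<times> nat \<Rightarrow> bool" where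
  "tStt_arc t a b \<longleftrightarrow>
     (\<exists>i j. i < t \<and> j < 3 \<and> a = (i, 0, 0) \<and> b = (i, j, 1)) \<or>
     (\<exists>i j l. i < t \<and> j < 3 \<and> 1 \<le> l \<and> l < t \<and> a = (i, j, l) \<and> b = (i, j, Suc l))"

lemma edges_tStt_iff: "{a, b} \<in> edges (tStt t) \<longleftrightarrow> tStt_arc t a b \<or> tStt_arc t b a"
proof
  assume "{a, b} \<in> edges (tStt t)"
  then show "tStt_arc t a b \<or> tStt_arc t b a"
    unfolding tStt_def tStt_arc_def by (auto simp: doubleton_eq_iff)
next
  assume "tStt_arc t a b \<or> tStt_arc t b a"
  then show "{a, b} \<in> edges (tStt t)"
    unfolding tStt_def tStt_arc_def by (auto simp: insert_commute)
qed

lemma tStt_arcE: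
  assumes "tStt_arc t a b"
  obtains (centre) i j where "i < t" "j < 3" "a = (i, 0, 0)" "b = (i, j, 1)"
    | (branch) i j m where "i < t" "j < 3" "1 \<le> m" "m < t" "a = (i, j, m)" "b = (i, j, Suc m)"
  using assms unfolding tStt_arc_def by blast

lemma tStt_arc_verts: "tStt_arc t a b \<Longrightarrow> a \<noteq> b \<and> a \<in> verts (tStt t) \<and> b \<in> verts (tStt t)"
  unfolding tStt_arc_def by (auto simp: verts_tStt_iff)

lemma verts_tStt_subset: "verts (tStt t) \<subseteq> {..<t} \<times> {..<3} \<times> {..t}"
  unfolding tStt_def by auto

lemma is_graph_tStt: "is_graph (tStt t)"
  unfolding is_graph_def
proof
  show "finite (verts (tStt t))"
    using verts_tStt_subset by (rule finite_subset) simp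
  show "\<forall>e\<in>edges (tStt t). \<exists>u v. e = {u, v} \<and> u \<noteq> v \<and> u \<in> verts (tStt t) \<and> v \<in> verts (tStt t)"
  proof
    fix e assume "e \<in> edges (tStt t)"
    then obtain a b where "e = {a, b}" "tStt_arc t a b" unfolding tStt_def tStt_arc_def by auto
    then show "\<exists>u v. e = {u, v} \<and> u \<noteq> v \<and> u \<in> verts (tStt t) \<and> v \<in> verts (tStt t)"
      using tStt_arc_verts by blast
  qed
qed

lemma card_verts_tStt: "card (verts (tStt t)) \<le> 3 * t\<^sup>2 + t"
proof -
  have V: "verts (tStt t) = (\<lambda>i. (i, 0, 0)) ` {..<t} \<union> {..<t} \<times> {..<3} \<times> {1..t}"
    unfolding tStt_def by auto
  have "card (verts (tStt t)) \<le>
      card ((\<lambda>i. (i, 0::nat, 0::nat)) ` {..<t}) + card ({..<t} \<times> {..<3::nat} \<times> {1..t})"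
    unfolding V by (rule card_Un_le)
  also have "\<dots> \<le> t + t * (3 * t)"
    using card_image_le[of "{..<t}" "\<lambda>i. (i, 0::nat, 0::nat)"] by (simp add: card_cartesian_product)
  finally show ?thesis by (simp add: power2_eq_square)
qed

section \<open>Embeddings into a complete bipartite pair\<close>

lemma bip_pair_injection_by_side:
  assumes bp: "bip_pair G A B" and fin: "finite A" "finite B" "finite V"
    and card: "card V \<le> card (A - U)" "card V \<le> card (B - U)"
  obtains f where "inj_on f V" "\<And>x. x \<in> V \<Longrightarrow> f x \<in> (if side x then A else B) - U"
proof -
  obtain f\<^sub>A where f\<^sub>A: "f\<^sub>A ` V \<subseteq> A - U" "inj_on f\<^sub>A V"
    using card_le_inj[OF fin(3) _ card(1)] fin by auto
  obtain f\<^sub>B where f\<^sub>B: "f\<^sub>B ` V \<subseteq> B - U" "inj_on f\<^sub>B V"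
    using card_le_inj[OF fin(3) _ card(2)] fin by auto
  define f where "f x = (if side x then f\<^sub>A x else f\<^sub>B x)" for x
  have f_side: "f x \<in> (if side x then A else B) - U" if "x \<in> V" for x
    using that f\<^sub>A(1) f\<^sub>B(1) unfolding f_def by auto
  have "A \<inter> B = {}" using bp unfolding bip_pair_def by simp
  have "inj_on f V"
  proof (rule inj_onI)
    fix x y assume xy: "x \<in> V" "y \<in> V" "f x = f y"
    then have "side x = side y" using f_side[of x] f_side[of y] \<open>A \<inter> B = {}\<close> by (auto split: if_splits)
    then show "x = y" using xy f\<^sub>A(2) f\<^sub>B(2) unfolding f_def by (auto simp: inj_on_eq_iff)
  qed
  then show ?thesis using that f_side by blast
qed

lemma bip_pair_embedding_extension:
  fixes T :: "'w graph" and G :: "'v graph" and side :: "'w \<Rightarrow> bool"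
  assumes T: "is_graph T" and bp: "bip_pair G A B" and fin: "finite A" "finite B"
    and \<pi>: "inj_on \<pi> P" "\<pi> ` P \<subseteq> verts G"
    and card: "card (verts T - P) \<le> card (A - \<pi> ` P)" "card (verts T - P) \<le> card (B - \<pi> ` P)"
    and inner: "\<And>a b. {a, b} \<in> edges T \<Longrightarrow> a \<in> P \<Longrightarrow> b \<in> P \<Longrightarrow> adj G (\<pi> a) (\<pi> b)"
    and boundary: "\<And>a b. {a, b} \<in> edges T \<Longrightarrow> a \<in> P \<Longrightarrow> b \<notin> P \<Longrightarrow>
       \<pi> a \<in> (if side b then B else A)"
    and outer: "\<And>a b. {a, b} \<in> edges T \<Longrightarrow> a \<notin> P \<Longrightarrow> b \<notin> P \<Longrightarrow> side a \<noteq> side b"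
  obtains \<phi> where "embedding T G \<phi>" "\<And>x. x \<in> P \<Longrightarrow> \<phi> x = \<pi> x"
    "\<And>x. x \<in> verts T - P \<Longrightarrow> \<phi> x \<in> (if side x then A else B)"
proof -
  let ?V = "verts T - P"
  have "finite ?V" using T unfolding is_graph_def by simp
  obtain f where f: "inj_on f ?V" "\<And>x. x \<in> ?V \<Longrightarrow> f x \<in> (if side x then A else B) - \<pi> ` P"
    by (rule bip_pair_injection_by_side[OF bp fin \<open>finite ?V\<close> card, where side = side]) blast
  define \<phi> where "\<phi> x = (if x \<in> P then \<pi> x else f x)" for x
  have side_\<phi>: "\<phi> x \<in> (if side x then A else B) - \<pi> ` P" if "x \<in> ?V" for x
    using that f(2) unfolding \<phi>_def by auto
  have "inj_on \<phi> ?V" using f(1) inj_on_cong[of ?V \<phi> f] unfolding \<phi>_def by simp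
  moreover have "inj_on \<phi> P" using \<pi>(1) inj_on_cong[of P \<phi> \<pi>] unfolding \<phi>_def by simp
  moreover have "\<phi> ` P \<inter> \<phi> ` ?V = {}"
  proof -
    have "\<phi> ` P = \<pi> ` P" by (simp add: \<phi>_def)
    moreover have "\<phi> ` ?V \<inter> \<pi> ` P = {}" using side_\<phi> by blast
    ultimately show ?thesis by blast
  qed
  moreover have "P - ?V = P" "?V - P = ?V" by auto
  ultimately have "inj_on \<phi> (P \<union> ?V)" unfolding inj_on_Un by simp
  then have inj: "inj_on \<phi> (verts T)" by (rule inj_on_subset) auto
  have AB: "A \<subseteq> verts G" "B \<subseteq> verts G" using bp unfolding bip_pair_def by auto
  have sub: "\<phi> ` verts T \<subseteq> verts G" using \<pi>(2) side_\<phi> AB unfolding \<phi>_def by (force split: if_splits)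
  have across: "adj G (\<phi> a) (\<phi> b)" if "{a, b} \<in> edges T" "a \<in> P" "b \<notin> P" for a b
  proof -
    have "b \<in> verts T" using edge_subset_verts[OF T that(1)] by simp
    then show ?thesis using boundary[OF that] side_\<phi>[of b] that(2,3) bip_pair_adj[OF bp]
      unfolding \<phi>_def by (auto split: if_splits)
  qed
  have edge: "adj G (\<phi> a) (\<phi> b)" if "{a, b} \<in> edges T" for a b
  proof (cases "a \<in> P"; cases "b \<in> P")
    assume "a \<in> P" "b \<in> P" then show ?thesis using inner[OF that] unfolding \<phi>_def by simp
  next
    assume "a \<in> P" "b \<notin> P" then show ?thesis using across that by blast
  next
    assume "a \<notin> P" "b \<in> P" then show ?thesis
      using across[of b a] that adj_commute by (metis insert_commute)
  next
    assume "a \<notin> P" "b \<notin> P"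
    moreover have "a \<in> verts T" "b \<in> verts T" using edge_subset_verts[OF T that] by auto
    ultimately show ?thesis
      using outer[OF that] side_\<phi>[of a] side_\<phi>[of b] bip_pair_adj[OF bp] by (auto split: if_splits)
  qed
  show ?thesis
  proof (rule that)
    show "embedding T G \<phi>" unfolding embedding_def using inj sub edge by blast
    show "\<phi> x = \<pi> x" if "x \<in> P" for x using that by (simp add: \<phi>_def)
    show "\<phi> x \<in> (if side x then A else B)" if "x \<in> verts T - P" for x using side_\<phi>[OF that] by blast
  qed
qed

lemma tStt_parity_embedding:
  fixes c :: "nat \<Rightarrow> nat"
  assumes bp: "bip_pair G A B" and fin: "finite A" "finite B"
    and card: "card (verts (tStt t)) \<le> card A" "card (verts (tStt t)) \<le> card B"
  obtains \<phi> where "embedding (tStt t) G \<phi>"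
    "\<And>i j l i' j' l'. (i, j, l) \<in> verts (tStt t) \<Longrightarrow> (i', j', l') \<in> verts (tStt t) \<Longrightarrow>
       even (l + c i) = even (l' + c i') \<Longrightarrow> \<not> adj G (\<phi> (i, j, l)) (\<phi> (i', j', l'))"
proof -
  define side where "side = (\<lambda>(i, j :: nat, l). even (l + c i))"
  have alternate: "side a \<noteq> side b" if "{a, b} \<in> edges (tStt t)" for a b
    using that unfolding edges_tStt_iff tStt_arc_def side_def by auto
  obtain \<phi> where \<phi>: "embedding (tStt t) G \<phi>"
    "\<And>x. x \<in> verts (tStt t) - {} \<Longrightarrow> \<phi> x \<in> (if side x then A else B)"
    by (rule bip_pair_embedding_extension[OF is_graph_tStt bp fin, where P = "{}" and side = side])
      (use card alternate in auto)
  show ?thesis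
  proof (rule that[OF \<phi>(1)])
    fix i j l i' j' l'
    assume "(i, j, l) \<in> verts (tStt t)" "(i', j', l') \<in> verts (tStt t)" "even (l + c i) = even (l' + c i')"
    then show "\<not> adj G (\<phi> (i, j, l)) (\<phi> (i', j', l'))"
      using \<phi>(2)[of "(i, j, l)"] \<phi>(2)[of "(i', j', l')"] bip_pair_not_adj[OF bp]
      unfolding side_def by (auto split: if_splits)
  qed
qed

section \<open>Rerouting a branch along a path\<close>

(* The embedding sends (i, j, l) to w = p 0, its parent (i, j, l - 1) to a\<^sub>1, (i, j', l') to a\<^sub>2,
   and the vertices (i, j, l + d) with d \<le> k, as far as the branch reaches, to p d; all other
   vertices are 2-coloured into A and B. *)
locale tStt_detour =
  fixes G :: "'v graph" and A B :: "'v set" and t :: nat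
    and w a\<^sub>1 a\<^sub>2 :: 'v and p :: "nat \<Rightarrow> 'v" and k :: nat
    and i j l j' l' :: nat
  assumes graph: "is_graph G" and bp: "bip_pair G A B" and fin: "finite A" "finite B"
    and card: "card (verts (tStt t)) \<le> card A" "card (verts (tStt t)) \<le> card B"
    and a\<^sub>1: "a\<^sub>1 \<in> A" "adj G w a\<^sub>1" and a\<^sub>2: "a\<^sub>2 \<in> A" "a\<^sub>2 \<noteq> a\<^sub>1"
    and path: "p 0 = w" "0 < k" "\<forall>m<k. adj G (p m) (p (Suc m))" "inj_on p {0..k}"
      "\<forall>m<k. p m \<notin> A \<union> B" "p k \<in> A \<union> B" "p k \<noteq> a\<^sub>1" "p k \<noteq> a\<^sub>2"
    and pair: "(i, j, l) \<in> verts (tStt t)" "(i, j', l') \<in> verts (tStt t)" "l' < l" "odd (l + l')"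
      "{(i, j, l), (i, j', l')} \<notin> edges (tStt t)"
begin

definition path_part :: "(nat \<times> nat \<times> nat) set" where
  "path_part = (\<lambda>m. (i, j, m)) ` {l..min (l + k) t}"

definition prescribed :: "(nat \<times> nat \<times> nat) set" where
  "prescribed = insert (i, j, l - 1) (insert (i, j', l') path_part)"

definition \<pi> :: "nat \<times> nat \<times> nat \<Rightarrow> 'v" where
  "\<pi> x = (if x = (i, j, l - 1) then a\<^sub>1 else if x = (i, j', l') then a\<^sub>2 else p (snd (snd x) - l))"

(* True means A. The parity is chosen so that the neighbours of (i, j, l - 1) and (i, j', l')
   fall into B; beyond (i, j, l) on branch j it is shifted so that the neighbour of (i, j, l + k)
   falls on the side opposite to p k. *)
definition side :: "nat \<times> nat \<times> nat \<Rightarrow> bool" where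
  "side = (\<lambda>(i\<^sub>0, j\<^sub>0, m). if i\<^sub>0 = i \<and> j\<^sub>0 = j \<and> l < m then (even (m + l + k) \<longleftrightarrow> p k \<in> A)
     else if i\<^sub>0 = i then odd (m + l) else even m)"

lemma pair_bounds: "i < t" "j < 3" "2 \<le> l" "l \<le> t"
proof -
  show "i < t" using pair(1) by (simp add: verts_tStt_iff)
  show "2 \<le> l"
  proof (rule ccontr)
    assume "\<not> 2 \<le> l"
    then have "l = 1" "l' = 0" "j' = 0" "j < 3" using pair(1-3) by (auto simp: verts_tStt_iff)
    then have "tStt_arc t (i, j', l') (i, j, l)" using \<open>i < t\<close> unfolding tStt_arc_def by auto
    then show False using pair(5) edges_tStt_iff by blast
  qed
  then show "j < 3" "l \<le> t" using pair(1) by (auto simp: verts_tStt_iff)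
qed

lemma parent_ne_target: "(i, j, l - 1) \<noteq> (i, j', l')"
proof
  assume "(i, j, l - 1) = (i, j', l')"
  then have "tStt_arc t (i, j', l') (i, j, l)"
    using pair_bounds unfolding tStt_arc_def by (auto intro!: exI[of _ "l - 1"])
  then show False using pair(5) edges_tStt_iff by blast
qed

lemma path_part_iff: "x \<in> path_part \<longleftrightarrow> (\<exists>m. x = (i, j, m) \<and> l \<le> m \<and> m \<le> l + k \<and> m \<le> t)"
  unfolding path_part_def by auto

lemma prescribed_subset: "prescribed \<subseteq> verts (tStt t)"
  using pair(2) pair_bounds unfolding prescribed_def by (auto simp: path_part_iff verts_tStt_iff)

lemma \<pi>_path_part: "x \<in> path_part \<Longrightarrow> \<pi> x = p (snd (snd x) - l)"
  using pair(3) pair_bounds(3) unfolding \<pi>_def by (auto simp: path_part_iff)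

lemma path_verts:
  assumes "m \<le> k" shows "p m \<in> verts G"
proof (cases "m < k")
  case True
  then show ?thesis using path(3) adj_verts[OF graph] by blast
next
  case False
  then have "m = Suc (k - 1)" "k - 1 < k" using assms path(2) by auto
  then show ?thesis using path(3) adj_verts[OF graph] by metis
qed

lemma path_meets_A_B_at_end:
  assumes "m \<le> k" "p m \<in> A \<union> B" shows "m = k"
proof (rule ccontr)
  assume "m \<noteq> k"
  then show False using assms path(5) by simp
qed

lemma \<pi>_image_path_part: "\<pi> ` path_part \<subseteq> p ` {0..k}"
  using \<pi>_path_part by (auto simp: path_part_iff)

lemma parent_target_notin_path_part: "(i, j, l - 1) \<notin> path_part" "(i, j', l') \<notin> path_part"
  using pair(3) pair_bounds(3) by (auto simp: path_part_iff)

lemma \<pi>_parent_target: "\<pi> (i, j, l - 1) = a\<^sub>1" "\<pi> (i, j', l') = a\<^sub>2"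
  using parent_ne_target by (auto simp: \<pi>_def)

lemma inj_on_\<pi>: "inj_on \<pi> prescribed"
proof -
  have "inj_on \<pi> path_part"
  proof (rule inj_onI)
    fix x y assume xy: "x \<in> path_part" "y \<in> path_part" "\<pi> x = \<pi> y"
    then obtain m m' where "x = (i, j, m)" "y = (i, j, m')" "l \<le> m" "l \<le> m'"
      "m - l \<in> {0..k}" "m' - l \<in> {0..k}"
      unfolding path_part_iff by auto
    moreover have "p (m - l) = p (m' - l)" using xy \<pi>_path_part calculation(1,2) by simp
    ultimately show "x = y" using inj_onD[OF path(4)] by fastforce
  qed
  moreover have "a \<notin> \<pi> ` path_part" if "a \<in> A" "a \<noteq> p k" for a
    using \<pi>_image_path_part path_meets_A_B_at_end that by fastforce
  ultimately show ?thesis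
    using a\<^sub>1(1) a\<^sub>2 path(7,8) parent_ne_target parent_target_notin_path_part \<pi>_parent_target
    unfolding prescribed_def by auto
qed

lemma \<pi>_image: "\<pi> ` prescribed \<subseteq> insert a\<^sub>1 (insert a\<^sub>2 (p ` {0..k}))"
  using \<pi>_image_path_part unfolding prescribed_def image_insert \<pi>_parent_target by blast

lemma \<pi>_image_verts: "\<pi> ` prescribed \<subseteq> verts G"
proof -
  have "A \<subseteq> verts G" using bp unfolding bip_pair_def by simp
  then have "insert a\<^sub>1 (insert a\<^sub>2 (p ` {0..k})) \<subseteq> verts G"
    using a\<^sub>1(1) a\<^sub>2(1) path_verts by auto
  then show ?thesis by (rule subset_trans[OF \<pi>_image])
qed

lemma card_free_vertices: "card (verts (tStt t) - prescribed) + 3 \<le> card (verts (tStt t))"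
proof -
  have fin_T: "finite (verts (tStt t))" using is_graph_tStt unfolding is_graph_def by simp
  have fin_P: "finite prescribed" using finite_subset[OF prescribed_subset fin_T] .
  have "{(i, j, l), (i, j, l - 1), (i, j', l')} \<subseteq> prescribed"
    using pair_bounds unfolding prescribed_def by (auto simp: path_part_iff)
  from card_mono[OF fin_P this] have "3 \<le> card prescribed"
    using pair(3) pair_bounds(3) parent_ne_target by auto
  then show ?thesis
    using card_Diff_subset[OF fin_P prescribed_subset] card_mono[OF fin_T prescribed_subset] by linarith
qed

lemma card_minus_\<pi>_image:
  assumes "X \<subseteq> A \<union> B" "finite X"
  shows "card X \<le> card (X - \<pi> ` prescribed) + 3"
proof -
  have "X - {a\<^sub>1, a\<^sub>2, p k} \<subseteq> X - \<pi> ` prescribed"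
  proof (intro subsetI DiffI)
    fix x assume x: "x \<in> X - {a\<^sub>1, a\<^sub>2, p k}"
    then show "x \<in> X" by simp
    show "x \<notin> \<pi> ` prescribed"
    proof
      assume "x \<in> \<pi> ` prescribed"
      then obtain m where "m \<le> k" "x = p m" using x \<pi>_image by auto
      moreover have "x \<in> A \<union> B" using x assms(1) by auto
      ultimately show False using x path_meets_A_B_at_end by auto
    qed
  qed
  then have "card (X - {a\<^sub>1, a\<^sub>2, p k}) \<le> card (X - \<pi> ` prescribed)"
    using assms(2) by (simp add: card_mono)
  moreover have "card {a\<^sub>1, a\<^sub>2, p k} \<le> 3" by (simp add: card_insert_if)
  then have "card X \<le> card (X - {a\<^sub>1, a\<^sub>2, p k}) + 3"
    using diff_card_le_card_Diff[of "{a\<^sub>1, a\<^sub>2, p k}" X] by simp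
  ultimately show ?thesis by linarith
qed

lemma card_free_le:
  assumes "X = A \<or> X = B"
  shows "card (verts (tStt t) - prescribed) \<le> card (X - \<pi> ` prescribed)"
  using card_free_vertices card_minus_\<pi>_image[of X] card fin assms by fastforce

lemma prescribed_iff:
  "(i\<^sub>0, j\<^sub>0, m) \<in> prescribed \<longleftrightarrow> i\<^sub>0 = i \<and>
     (j\<^sub>0 = j \<and> m = l - 1 \<or> j\<^sub>0 = j' \<and> m = l' \<or> j\<^sub>0 = j \<and> l \<le> m \<and> m \<le> l + k \<and> m \<le> t)"
  by (auto simp: prescribed_def path_part_iff)

lemma \<pi>_path: "l \<le> m \<Longrightarrow> \<pi> (i, j, m) = p (m - l)"
  using pair(3) unfolding \<pi>_def by auto

lemma inner_arc:
  assumes arc: "tStt_arc t a b" and "a \<in> prescribed" "b \<in> prescribed"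
  shows "adj G (\<pi> a) (\<pi> b)"
  using arc
proof (cases rule: tStt_arcE)
  case (centre i\<^sub>0 j\<^sub>0)
  then have "(i\<^sub>0, 0, 0) \<in> prescribed" "(i\<^sub>0, j\<^sub>0, 1) \<in> prescribed" using assms(2,3) by simp_all
  then have False unfolding prescribed_iff using pair(4) pair_bounds(3) by auto presburger
  then show ?thesis ..
next
  case (branch i\<^sub>0 j\<^sub>0 m)
  then have "(i\<^sub>0, j\<^sub>0, m) \<in> prescribed" "(i\<^sub>0, j\<^sub>0, Suc m) \<in> prescribed"
    using assms(2,3) by simp_all
  then have "i\<^sub>0 = i \<and> j\<^sub>0 = j \<and> (l \<le> m \<and> Suc m \<le> l + k \<or> Suc m = l)"
    unfolding prescribed_iff using pair(3,4) parent_ne_target by auto presburger+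
  then show ?thesis
  proof (elim conjE disjE)
    assume "i\<^sub>0 = i" "j\<^sub>0 = j" "l \<le> m" "Suc m \<le> l + k"
    then show ?thesis using branch path(3) by (simp add: \<pi>_path Suc_diff_le)
  next
    assume "i\<^sub>0 = i" "j\<^sub>0 = j" "Suc m = l"
    then have "\<pi> a = a\<^sub>1" "\<pi> b = w" using branch \<pi>_parent_target \<pi>_path[of l] path(1) by auto
    then show ?thesis using a\<^sub>1(2) adj_commute by metis
  qed
qed

lemma boundary_arc_out:
  assumes arc: "tStt_arc t a b" and a: "a \<in> prescribed" and b: "b \<notin> prescribed"
  shows "\<pi> a \<in> (if side b then B else A)"
proof -
  have "a = (i, j', l') \<and> \<not> side b \<or> a = (i, j, l + k) \<and> b = (i, j, Suc (l + k))"
    using arc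
  proof (cases rule: tStt_arcE)
    case (centre i\<^sub>0 j\<^sub>0)
    show ?thesis using a b pair(4) pair_bounds(3)
      unfolding centre(3,4) prescribed_iff side_def by (auto; presburger)
  next
    case (branch i\<^sub>0 j\<^sub>0 m)
    show ?thesis using a b branch(4) pair(3,4) pair_bounds(3)
      unfolding branch(5,6) prescribed_iff side_def by (auto; presburger)
  qed
  then show ?thesis
  proof
    assume "a = (i, j', l') \<and> \<not> side b"
    then show ?thesis using \<pi>_parent_target(2) a\<^sub>2(1) by simp
  next
    assume "a = (i, j, l + k) \<and> b = (i, j, Suc (l + k))"
    then have "\<pi> a = p k" "side b \<longleftrightarrow> p k \<notin> A" using \<pi>_path[of "l + k"] unfolding side_def by auto
    then show ?thesis using path(6) by auto
  qed
qed

lemma boundary_arc_in: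
  assumes arc: "tStt_arc t a b" and b: "b \<in> prescribed" and a: "a \<notin> prescribed"
  shows "\<pi> b \<in> (if side a then B else A)"
proof -
  have "(b = (i, j, l - 1) \<or> b = (i, j', l')) \<and> \<not> side a"
    using arc
  proof (cases rule: tStt_arcE)
    case (centre i\<^sub>0 j\<^sub>0)
    show ?thesis using a b pair(4) pair_bounds(3)
      unfolding centre(3,4) prescribed_iff side_def by (auto; presburger)
  next
    case (branch i\<^sub>0 j\<^sub>0 m)
    from b have i\<^sub>0: "i\<^sub>0 = i" and b_cases: "j\<^sub>0 = j \<and> Suc m = l - 1 \<or> j\<^sub>0 = j' \<and> Suc m = l' \<or>
        j\<^sub>0 = j \<and> l \<le> Suc m \<and> Suc m \<le> l + k \<and> Suc m \<le> t"
      unfolding branch(6) prescribed_iff by auto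
    have "\<not> (j\<^sub>0 = j \<and> l \<le> Suc m \<and> Suc m \<le> l + k \<and> Suc m \<le> t)"
    proof
      assume "j\<^sub>0 = j \<and> l \<le> Suc m \<and> Suc m \<le> l + k \<and> Suc m \<le> t"
      then have "(i\<^sub>0, j\<^sub>0, m) \<in> prescribed" unfolding prescribed_iff using i\<^sub>0 by auto
      then show False using a branch(5) by simp
    qed
    with b_cases have "j\<^sub>0 = j \<and> Suc m = l - 1 \<or> j\<^sub>0 = j' \<and> Suc m = l'" by blast
    moreover from this have "\<not> side a"
      unfolding branch(5) side_def using i\<^sub>0 pair(3,4) by (auto; presburger)
    ultimately show ?thesis unfolding branch(6) using i\<^sub>0 by auto
qed
  then show ?thesis using \<pi>_parent_target a\<^sub>1(1) a\<^sub>2(1) by auto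
qed

lemma outer_arc:
  assumes arc: "tStt_arc t a b" and "a \<notin> prescribed" "b \<notin> prescribed"
  shows "side a \<noteq> side b"
  using arc
proof (cases rule: tStt_arcE)
  case (centre i\<^sub>0 j\<^sub>0)
  show ?thesis using pair_bounds(3) unfolding centre(3,4) side_def by auto
next
  case (branch i\<^sub>0 j\<^sub>0 m)
  show ?thesis using assms(2) branch(4) pair_bounds(4)
    unfolding branch(5,6) prescribed_iff side_def by auto
qed

lemma detour_embedding:
  obtains \<phi> where "embedding (tStt t) G \<phi>" "\<phi> (i, j, l) = w" "\<phi> (i, j', l') = a\<^sub>2"
proof -
  obtain \<phi> where \<phi>: "embedding (tStt t) G \<phi>" "\<And>x. x \<in> prescribed \<Longrightarrow> \<phi> x = \<pi> x"
  proof (rule bip_pair_embedding_extension[OF is_graph_tStt bp fin inj_on_\<pi> \<pi>_image_verts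
        card_free_le card_free_le, where side = side])
    fix a b assume "{a, b} \<in> edges (tStt t)"
    then have "tStt_arc t a b \<or> tStt_arc t b a" by (simp add: edges_tStt_iff)
    then show "a \<in> prescribed \<Longrightarrow> b \<in> prescribed \<Longrightarrow> adj G (\<pi> a) (\<pi> b)"
      and "a \<in> prescribed \<Longrightarrow> b \<notin> prescribed \<Longrightarrow> \<pi> a \<in> (if side b then B else A)"
      and "a \<notin> prescribed \<Longrightarrow> b \<notin> prescribed \<Longrightarrow> side a \<noteq> side b"
      using inner_arc boundary_arc_out boundary_arc_in outer_arc adj_commute by metis+
  qed auto
  have "(i, j, l) \<in> prescribed" "(i, j', l') \<in> prescribed"
    using pair_bounds by (auto simp: prescribed_iff)
  then show ?thesis using that \<phi> \<pi>_path[of l] \<pi>_parent_target(2) path(1) by simp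
qed

end

section \<open>Paths avoiding a non-cut vertex\<close>

lemma reach_refl: "reach G x x"
  unfolding reach_def by simp

lemma reach_trans: "reach G x y \<Longrightarrow> reach G y z \<Longrightarrow> reach G x z"
  unfolding reach_def by simp

lemma reach_adj: "x \<in> verts G \<Longrightarrow> y \<in> verts G \<Longrightarrow> adj G x y \<Longrightarrow> reach G x y"
  unfolding reach_def by auto

lemma reach_sym: "reach G x y \<Longrightarrow> reach G y x"
proof -
  have "symp (\<lambda>u v. u \<in> verts G \<and> v \<in> verts G \<and> adj G u v)"
    by (rule sympI) (metis adj_commute)
  then show "reach G x y \<Longrightarrow> reach G y x" unfolding reach_def by (rule sympD[OF symp_rtranclp])
qed

lemma adj_delete_vertex: "adj (delete_vertex G a) u v \<longleftrightarrow> adj G u v \<and> u \<noteq> a \<and> v \<noteq> a"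
  unfolding delete_vertex_def adj_def by auto

lemma reach_delete_vertex:
  assumes "reach (delete_vertex G a) x y" shows "reach G x y"
proof -
  have "(\<lambda>u v. u \<in> verts (delete_vertex G a) \<and> v \<in> verts (delete_vertex G a) \<and> adj (delete_vertex G a) u v)
      \<le> (\<lambda>u v. u \<in> verts G \<and> v \<in> verts G \<and> adj G u v)"
    unfolding delete_vertex_def adj_def by auto
  then show ?thesis using assms unfolding reach_def by (blast intro: predicate2D[OF rtranclp_mono])
qed

lemma component_eq:
  assumes "reach G x y" shows "{u \<in> verts G. reach G x u} = {u \<in> verts G. reach G y u}"
proof -
  have "reach G x u \<longleftrightarrow> reach G y u" for u using reach_trans reach_sym assms by metis
  then show ?thesis by simp
qed

lemma card_image_less_if_coarser:
  assumes "finite X" and factor: "\<And>x y. x \<in> X \<Longrightarrow> y \<in> X \<Longrightarrow> g x = g y \<Longrightarrow> f x = f y"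
    and "x \<in> X" "y \<in> X" "g x \<noteq> g y" "f x = f y"
  shows "card (f ` X) < card (g ` X)"
proof -
  define h where "h S = f (SOME z. z \<in> X \<and> g z = S)" for S
  have h: "h (g z) = f z" if "z \<in> X" for z
  proof -
    have "\<exists>z'. z' \<in> X \<and> g z' = g z" using that by blast
    from someI_ex[OF this] show ?thesis unfolding h_def using factor that by blast
  qed
  then have "f ` X = h ` g ` X" by (simp add: image_image)
  moreover have "\<not> inj_on h (g ` X)" using assms(3-6) h by (metis image_eqI inj_onD)
  then have "card (h ` g ` X) < card (g ` X)"
    using card_image_le[of "g ` X" h] inj_on_iff_eq_card[of "g ` X" h] \<open>finite X\<close> by fastforce
  ultimately show ?thesis by simp
qed

lemma reach_delete_non_cut_vertex:
  assumes G: "is_graph G" and nc: "\<not> cut_vertex G a" and a: "a \<in> verts G"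
    and w: "adj G w a" "w \<noteq> a" and b: "adj G a b" "b \<noteq> a"
  shows "reach (delete_vertex G a) w b"
proof (rule ccontr)
  assume nr: "\<not> reach (delete_vertex G a) w b"
  define D where "D = delete_vertex G a"
  define cG where "cG = (\<lambda>x. {u \<in> verts G. reach G x u})"
  define cD where "cD = (\<lambda>x. {u \<in> verts D. reach D x u})"
  have VD: "verts D = verts G - {a}" unfolding D_def delete_vertex_def by simp
  have wb: "w \<in> verts G" "b \<in> verts G" "w \<in> verts D" "b \<in> verts D"
    using w b adj_verts[OF G] VD by auto
  have "cG a = cG w" using component_eq reach_sym reach_adj[OF wb(1) a w(1)] unfolding cG_def by metis
  then have "cG ` verts G = cG ` verts D" using wb(3) VD by auto
  moreover have "card (cG ` verts D) < card (cD ` verts D)"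
  proof (rule card_image_less_if_coarser)
    show "finite (verts D)" using G VD unfolding is_graph_def by simp
    show "cG x = cG y" if "x \<in> verts D" "y \<in> verts D" "cD x = cD y" for x y
    proof -
      have "y \<in> cD x" using that by (simp add: cD_def reach_refl)
      then have "reach D x y" unfolding cD_def by simp
      then have "reach G x y" unfolding D_def by (rule reach_delete_vertex)
      then show ?thesis unfolding cG_def by (rule component_eq)
    qed
    have "b \<notin> cD w" using nr unfolding cD_def D_def by simp
    moreover have "b \<in> cD b" using wb(4) by (simp add: cD_def reach_refl)
    ultimately show "cD w \<noteq> cD b" by metis
    have "reach G w b" using reach_trans[OF reach_adj[OF wb(1) a w(1)] reach_adj[OF a wb(2) b(1)]] .
    then show "cG w = cG b" unfolding cG_def by (rule component_eq)
  qed (use wb in auto)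
  moreover have "num_components G = card (cG ` verts G)" "num_components D = card (cD ` verts D)"
    unfolding num_components_def cG_def cD_def by simp_all
  ultimately have "num_components G < num_components D" by simp
  then show False using nc a unfolding cut_vertex_def D_def by simp
qed

lemma shortest_walk_to_set:
  assumes "R\<^sup>*\<^sup>* x y" "y \<in> S" "x \<notin> S"
  obtains f n where "f 0 = x" "0 < n" "\<forall>m<n. R (f m) (f (Suc m))" "inj_on f {0..n}"
    "\<forall>m<n. f m \<notin> S" "f n \<in> S"
proof -
  define Q where "Q n \<longleftrightarrow> (\<exists>z\<in>S. (R ^^ n) x z)" for n
  obtain n\<^sub>0 where "(R ^^ n\<^sub>0) x y" using assms(1) rtranclp_imp_relpowp by metis
  then have "Q n\<^sub>0" using assms(2) unfolding Q_def by blast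
  define n where "n = (LEAST n. Q n)"
  have "Q n" unfolding n_def using \<open>Q n\<^sub>0\<close> by (rule LeastI)
  have min: "\<not> Q m" if "m < n" for m using that not_less_Least unfolding n_def by blast
  obtain f where f: "f 0 = x" "f n \<in> S" "\<forall>m<n. R (f m) (f (Suc m))"
    using \<open>Q n\<close> unfolding Q_def relpowp_fun_conv by blast
  have prefix: "(R ^^ m) x (f m)" if "m \<le> n" for m
    unfolding relpowp_fun_conv using f(1,3) that by auto
  have suffix: "(R ^^ (n - m)) (f m) (f n)" if "m \<le> n" for m
    unfolding relpowp_fun_conv using f(3) that
    by (intro exI[of _ "\<lambda>i. f (m + i)"]) auto
  have avoid: "\<forall>m<n. f m \<notin> S" using prefix min unfolding Q_def by fastforce
  have "0 < n" using f(1,2) assms(3) by (cases n) auto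
  have no_repeat: "f a \<noteq> f b" if "a < b" "b \<le> n" for a b
  proof
    assume "f a = f b"
    then have "(R ^^ (a + (n - b))) x (f n)"
      using prefix[of a] suffix[of b] that unfolding relpowp_add by auto
    then have "Q (a + (n - b))" using f(2) unfolding Q_def by blast
    then show False using min that by simp
  qed
  have "inj_on f {0..n}"
    by (rule inj_onI) (metis atLeastAtMost_iff linorder_neqE_nat no_repeat)
  then show ?thesis using that f \<open>0 < n\<close> avoid by blast
qed

lemma path_to_set_avoiding_non_cut_vertex:
  assumes G: "is_graph G" and nc: "\<not> cut_vertex G a" and a: "a \<in> verts G"
    and w: "adj G w a" "w \<noteq> a" "w \<notin> S" and b: "adj G a b" "b \<noteq> a" "b \<in> S"
  obtains f n where "f 0 = w" "0 < n" "\<forall>m<n. adj G (f m) (f (Suc m))" "inj_on f {0..n}"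
    "\<forall>m<n. f m \<notin> S" "f n \<in> S" "f n \<noteq> a"
proof -
  let ?D = "delete_vertex G a"
  obtain f n where f: "f 0 = w" "0 < n"
    "\<forall>m<n. f m \<in> verts ?D \<and> f (Suc m) \<in> verts ?D \<and> adj ?D (f m) (f (Suc m))"
    "inj_on f {0..n}" "\<forall>m<n. f m \<notin> S" "f n \<in> S"
    using reach_delete_non_cut_vertex[OF G nc a w(1,2) b(1,2)] unfolding reach_def
    by (rule shortest_walk_to_set[where S = S]) (use w(3) b(3) in auto)
  have "\<forall>m<n. adj G (f m) (f (Suc m))" using f(3) by (simp add: adj_delete_vertex)
  moreover have "n - 1 < n" "Suc (n - 1) = n" using f(2) by simp_all
  then have "f n \<in> verts ?D" using f(3) by metis
  then have "f n \<noteq> a" unfolding delete_vertex_def by simp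
  ultimately show ?thesis using that f by blast
qed

section \<open>Mixed vertices\<close>

lemma escape_path:
  assumes G: "is_graph G" and nocut: "\<forall>v\<in>verts G. \<not> cut_vertex G v" and bp: "bip_pair G A B"
    and cA: "3 \<le> card A" and "b \<in> B"
    and w: "w \<notin> A \<union> B" and a\<^sub>1: "a\<^sub>1 \<in> A" "adj G w a\<^sub>1" and a\<^sub>0: "a\<^sub>0 \<in> A" "\<not> adj G w a\<^sub>0"
  obtains p k a\<^sub>2 where "a\<^sub>2 \<in> A" "a\<^sub>2 \<noteq> a\<^sub>1" "\<not> adj G w a\<^sub>2"
    "p 0 = w" "0 < k" "\<forall>m<k. adj G (p m) (p (Suc m))" "inj_on p {0..k}"
    "\<forall>m<k. p m \<notin> A \<union> B" "p k \<in> A \<union> B" "p k \<noteq> a\<^sub>1" "p k \<noteq> a\<^sub>2"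
proof (cases "\<exists>n\<in>A \<union> B - {a\<^sub>1}. adj G w n")
  case True
  then obtain n where n: "n \<in> A \<union> B" "n \<noteq> a\<^sub>1" "adj G w n" by blast
  have "w \<noteq> n" using n(3) not_adj_self[OF G] by metis
  then have "inj_on (\<lambda>m. if m = 0 then w else n) {0..1::nat}" by (auto simp: inj_on_def)
  moreover have "a\<^sub>0 \<noteq> a\<^sub>1" "a\<^sub>0 \<noteq> n" using a\<^sub>0(2) a\<^sub>1(2) n(3) by auto
  ultimately show ?thesis
    using that[of a\<^sub>0 "\<lambda>m. if m = 0 then w else n" 1] n w a\<^sub>0 by simp
next
  case False
  have "A \<inter> B = {}" "A \<subseteq> verts G" using bp unfolding bip_pair_def by auto
  then obtain f n where f: "f 0 = w" "0 < n" "\<forall>m<n. adj G (f m) (f (Suc m))" "inj_on f {0..n}"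
    "\<forall>m<n. f m \<notin> A \<union> B" "f n \<in> A \<union> B" "f n \<noteq> a\<^sub>1"
    using path_to_set_avoiding_non_cut_vertex[OF G _ _ a\<^sub>1(2) _ w
        bip_pair_adj[OF bp a\<^sub>1(1) \<open>b \<in> B\<close>, THEN conjunct1] _ UnI2[OF \<open>b \<in> B\<close>]]
      nocut a\<^sub>1(1) w \<open>b \<in> B\<close> by blast
  obtain a\<^sub>2 where "a\<^sub>2 \<in> A" "a\<^sub>2 \<noteq> a\<^sub>1" "a\<^sub>2 \<noteq> f n"
  proof -
    have "card {a\<^sub>1, f n} \<le> 2" by (simp add: card_insert_if)
    then have "1 \<le> card (A - {a\<^sub>1, f n})" using cA diff_card_le_card_Diff[of "{a\<^sub>1, f n}" A] by simp
    then have "A - {a\<^sub>1, f n} \<noteq> {}" by (metis card.empty not_one_le_zero)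
    then show ?thesis using that by blast
  qed
  moreover from this have "\<not> adj G w a\<^sub>2" using False by auto
  ultimately show ?thesis using that f by blast
qed

lemma mixed_vertex_separates_odd_pair:
  assumes G: "is_graph G" and nocut: "\<forall>v\<in>verts G. \<not> cut_vertex G v" and bp: "bip_pair G A B"
    and fin: "finite A" "finite B"
    and card: "card (verts (tStt t)) \<le> card A" "card (verts (tStt t)) \<le> card B"
    and "3 \<le> card A" "b \<in> B"
    and w: "w \<notin> A \<union> B" and a\<^sub>1: "a\<^sub>1 \<in> A" "adj G w a\<^sub>1" and a\<^sub>0: "a\<^sub>0 \<in> A" "\<not> adj G w a\<^sub>0"
    and pair: "(i, j, l) \<in> verts (tStt t)" "(i, j', l') \<in> verts (tStt t)" "l' < l" "odd (l + l')"
      "{(i, j, l), (i, j', l')} \<notin> edges (tStt t)"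
  shows "\<exists>\<phi>. embedding (tStt t) G \<phi> \<and> \<not> adj G (\<phi> (i, j, l)) (\<phi> (i, j', l'))"
proof -
  obtain p k a\<^sub>2 where "a\<^sub>2 \<in> A" "a\<^sub>2 \<noteq> a\<^sub>1" "\<not> adj G w a\<^sub>2"
    and path: "p 0 = w" "0 < k" "\<forall>m<k. adj G (p m) (p (Suc m))" "inj_on p {0..k}"
      "\<forall>m<k. p m \<notin> A \<union> B" "p k \<in> A \<union> B" "p k \<noteq> a\<^sub>1" "p k \<noteq> a\<^sub>2"
    by (rule escape_path[OF G nocut bp \<open>3 \<le> card A\<close> \<open>b \<in> B\<close> w a\<^sub>1 a\<^sub>0])
  interpret tStt_detour G A B t w a\<^sub>1 a\<^sub>2 p k i j l j' l'
    by unfold_locales (use G bp fin card a\<^sub>1 \<open>a\<^sub>2 \<in> A\<close> \<open>a\<^sub>2 \<noteq> a\<^sub>1\<close> path pair in auto)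
  obtain \<phi> where "embedding (tStt t) G \<phi>" "\<phi> (i, j, l) = w" "\<phi> (i, j', l') = a\<^sub>2"
    by (rule detour_embedding)
  then show ?thesis using \<open>\<not> adj G w a\<^sub>2\<close> by auto
qed

lemma tStt_parity_separates:
  assumes bp: "bip_pair G A B" and fin: "finite A" "finite B"
    and card: "card (verts (tStt t)) \<le> card A" "card (verts (tStt t)) \<le> card B"
    and x: "(i\<^sub>1, j\<^sub>1, l\<^sub>1) \<in> verts (tStt t)" and y: "(i\<^sub>2, j\<^sub>2, l\<^sub>2) \<in> verts (tStt t)"
    and same_side: "\<not> (i\<^sub>1 = i\<^sub>2 \<and> odd (l\<^sub>1 + l\<^sub>2))"
  shows "\<exists>\<phi>. embedding (tStt t) G \<phi> \<and> \<not> adj G (\<phi> (i\<^sub>1, j\<^sub>1, l\<^sub>1)) (\<phi> (i\<^sub>2, j\<^sub>2, l\<^sub>2))"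
proof -
  define c where "c i = (if i = i\<^sub>2 then l\<^sub>1 + l\<^sub>2 else 0)" for i
  obtain \<phi> where "embedding (tStt t) G \<phi>"
    and parity: "\<And>i j l i' j' l'. (i, j, l) \<in> verts (tStt t) \<Longrightarrow> (i', j', l') \<in> verts (tStt t) \<Longrightarrow>
      even (l + c i) = even (l' + c i') \<Longrightarrow> \<not> adj G (\<phi> (i, j, l)) (\<phi> (i', j', l'))"
    by (rule tStt_parity_embedding[OF bp fin card, where c = c]) blast
  moreover have "even (l\<^sub>1 + c i\<^sub>1) = even (l\<^sub>2 + c i\<^sub>2)" using same_side unfolding c_def by auto
  ultimately show ?thesis using x y by blast
qed

lemma mixed_vertex_inter_to_tStt:
  assumes G: "is_graph G" and nocut: "\<forall>v\<in>verts G. \<not> cut_vertex G v" and bp: "bip_pair G A B"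
    and cA: "3 * t\<^sup>2 + t + 1 \<le> card A" and cB: "3 * t\<^sup>2 + t + 1 \<le> card B"
    and w: "w \<notin> A \<union> B" and a\<^sub>1: "a\<^sub>1 \<in> A" "adj G w a\<^sub>1" and a\<^sub>0: "a\<^sub>0 \<in> A" "\<not> adj G w a\<^sub>0"
  shows "inter_to G (tStt t)"
proof -
  have "A \<subseteq> verts G" "B \<subseteq> verts G" using bp unfolding bip_pair_def by auto
  then have fin: "finite A" "finite B" using G finite_subset unfolding is_graph_def by auto
  have card: "card (verts (tStt t)) \<le> card A" "card (verts (tStt t)) \<le> card B"
    using card_verts_tStt[of t] cA cB by linarith+
  obtain \<phi>\<^sub>0 where "embedding (tStt t) G \<phi>\<^sub>0"
    using tStt_parity_embedding[OF bp fin card, of "\<lambda>_. 0"] by metis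
  then show ?thesis
  proof (rule inter_to_if_separating_embeddings[OF G is_graph_tStt])
    fix x y assume x: "x \<in> verts (tStt t)" and y: "y \<in> verts (tStt t)" and "x \<noteq> y"
      and xy: "{x, y} \<notin> edges (tStt t)"
    obtain i\<^sub>1 j\<^sub>1 l\<^sub>1 i\<^sub>2 j\<^sub>2 l\<^sub>2 where xy_def: "x = (i\<^sub>1, j\<^sub>1, l\<^sub>1)" "y = (i\<^sub>2, j\<^sub>2, l\<^sub>2)"
      by (cases x, cases y) auto
    show "\<exists>\<phi>. embedding (tStt t) G \<phi> \<and> \<not> adj G (\<phi> x) (\<phi> y)"
    proof (cases "i\<^sub>1 = i\<^sub>2 \<and> odd (l\<^sub>1 + l\<^sub>2)")
      case True
      have "0 < t" using x by (simp add: xy_def verts_tStt_iff)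
      then have "1 \<le> t\<^sup>2" by simp
      then have "3 \<le> card A" using cA by linarith
      obtain b where "b \<in> B" using cB by fastforce
      note odd_pair = mixed_vertex_separates_odd_pair[OF G nocut bp fin card \<open>3 \<le> card A\<close> \<open>b \<in> B\<close> w a\<^sub>1 a\<^sub>0]
      have x': "(i\<^sub>1, j\<^sub>1, l\<^sub>1) \<in> verts (tStt t)" and y': "(i\<^sub>1, j\<^sub>2, l\<^sub>2) \<in> verts (tStt t)"
        using x y True unfolding xy_def by simp_all
      have "l\<^sub>1 \<noteq> l\<^sub>2" using True by auto
      then consider "l\<^sub>2 < l\<^sub>1" | "l\<^sub>1 < l\<^sub>2" by (metis linorder_neqE_nat)
      then show ?thesis
      proof cases
        case 1
        then show ?thesis using odd_pair[OF x' y'] True xy unfolding xy_def by simp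
      next
        case 2
        have "{(i\<^sub>1, j\<^sub>2, l\<^sub>2), (i\<^sub>1, j\<^sub>1, l\<^sub>1)} \<notin> edges (tStt t)"
          using xy True unfolding xy_def by (simp add: insert_commute)
        then obtain \<phi> where "embedding (tStt t) G \<phi>" "\<not> adj G (\<phi> y) (\<phi> x)"
          using odd_pair[OF y' x' 2] True unfolding xy_def by (auto simp: add.commute)
        then show ?thesis by (metis adj_commute)
      qed
    next
      case False
      then show ?thesis using tStt_parity_separates[OF bp fin card] x y unfolding xy_def by blast
    qed
  qed
qed

lemma bip_pair_insert:
  assumes bp: "bip_pair G A B" and G: "is_graph G" and w: "w \<in> verts G" "w \<notin> A"
    and "\<forall>a\<in>A. adj G w a" and "\<forall>b\<in>B. \<not> adj G w b"
  shows "bip_pair G A (insert w B)"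
proof -
  have w_isolated: "\<not> adj G w v \<and> \<not> adj G v w" if "v \<in> insert w B" for v
  proof (cases "v = w")
    case True
    then show ?thesis using not_adj_self[OF G] by simp
  next
    case False
    then show ?thesis using that assms(6) adj_commute by (metis insertE)
  qed
  have "\<not> adj G u v" if "u \<in> insert w B" "v \<in> insert w B" for u v
    using that w_isolated bip_pair_not_adj[OF bp] by (metis insertE)
  moreover have "adj G a v" if "a \<in> A" "v \<in> insert w B" for a v
  proof (cases "v = w")
    case True
    then show ?thesis using that(1) assms(5) adj_commute by metis
  next
    case False
    then show ?thesis using that bip_pair_adj[OF bp] by simp
  qed
  ultimately show ?thesis using bp w unfolding bip_pair_def independent_def complete_to_def by auto
qed

lemma maximal_bip_pair_uniform_vertex:
  assumes G: "is_graph G" and max: "maximal_bip_pair G A B" and w: "w \<in> verts G" "w \<notin> A \<union> B"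
    and uniform_A: "(\<forall>a\<in>A. adj G w a) \<or> (\<forall>a\<in>A. \<not> adj G w a)"
    and uniform_B: "(\<forall>b\<in>B. adj G w b) \<or> (\<forall>b\<in>B. \<not> adj G w b)"
  shows "complete_to G {w} (A \<union> B) \<or> anticomplete_to G {w} (A \<union> B)"
proof (rule ccontr)
  assume not: "\<not> ?thesis"
  have bp: "bip_pair G A B" using max unfolding maximal_bip_pair_def by simp
  have "\<exists>A' B'. A \<subseteq> A' \<and> B \<subseteq> B' \<and> bip_pair G A' B' \<and> A \<union> B \<subset> A' \<union> B'"
    using uniform_A
  proof (elim disjE)
    assume A: "\<forall>a\<in>A. adj G w a"
    then have "\<forall>b\<in>B. \<not> adj G w b" using uniform_B not unfolding complete_to_def by auto
    then have "bip_pair G A (insert w B)" using bip_pair_insert[OF bp G w(1)] A w(2) by blast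
    moreover have "A \<union> B \<subset> A \<union> insert w B" using w(2) by auto
    ultimately show ?thesis by blast
  next
    assume A: "\<forall>a\<in>A. \<not> adj G w a"
    then have "\<forall>b\<in>B. adj G w b" using uniform_B not unfolding anticomplete_to_def by auto
    then have "bip_pair G B (insert w A)"
      using bip_pair_insert[OF bip_pair_swap[OF bp] G w(1)] A w(2) by blast
    then have "bip_pair G (insert w A) B" by (rule bip_pair_swap)
    moreover have "A \<union> B \<subset> insert w A \<union> B" using w(2) by auto
    ultimately show ?thesis by blast
  qed
  then show False using max unfolding maximal_bip_pair_def by blast
qed

theorem mainTheorem3:
  fixes t :: nat and G :: "'v graph" and A B :: "'v set"
  assumes "X_class t G"
    and "\<forall>v \<in> verts G. \<not> cut_vertex G v"
    and "maximal_bip_pair G A B"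
    and "card A \<ge> 3 * t^2 + t + 1" and "card B \<ge> 3 * t^2 + t + 1"
  shows "is_module G (A \<union> B)"
proof (rule ccontr)
  assume "\<not> is_module G (A \<union> B)"
  have G: "is_graph G" and no_tStt: "\<not> inter_to G (tStt t)"
    using assms(1) unfolding X_class_def sifree1_def by auto
  have bp: "bip_pair G A B" using assms(3) unfolding maximal_bip_pair_def by simp
  then obtain w where w: "w \<in> verts G" "w \<notin> A \<union> B"
    and mixed: "\<not> complete_to G {w} (A \<union> B)" "\<not> anticomplete_to G {w} (A \<union> B)"
    using \<open>\<not> is_module G (A \<union> B)\<close> unfolding is_module_def bip_pair_def by blast
  consider (A) "\<exists>a\<^sub>1\<in>A. \<exists>a\<^sub>0\<in>A. adj G w a\<^sub>1 \<and> \<not> adj G w a\<^sub>0"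
    | (B) "\<exists>b\<^sub>1\<in>B. \<exists>b\<^sub>0\<in>B. adj G w b\<^sub>1 \<and> \<not> adj G w b\<^sub>0"
    using maximal_bip_pair_uniform_vertex[OF G assms(3) w] mixed by blast
  then have "inter_to G (tStt t)"
  proof cases
    case A
    then show ?thesis using mixed_vertex_inter_to_tStt[OF G assms(2) bp assms(4,5) w(2)] by blast
  next
    case B
    then show ?thesis
      using mixed_vertex_inter_to_tStt[OF G assms(2) bip_pair_swap[OF bp] assms(5,4)] w(2) by blast
  qed
  then show False using no_tStt by simp
qed

end
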